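(* Let $0<\alpha<1$. Let $N\ge1$, $0\le N_1<N$, and let $p=(p_1,\dots,p_N)$ be a probability vector with $p_1=\dots=p_{N_1}=0$ and $p_k>0$ for $N_1<k\le N$. Let $c_1,\dots,c_N$ be fixed reals, not all zero, with $0\le c_k\le1$ for $k\le N_1$, $|c_k|\le1$ for $k>N_1$, and $\sum_{k=1}^Nc_k=0$. For $0<\varepsilon\le\min_{k>N_1}p_k$ define $p(\varepsilon)$ by $p_k(\varepsilon)=c_k\varepsilon$ for $k\le N_1$ and $p_k(\varepsilon)=p_k+c_k\varepsilon$ for $k>N_1$. Write $S=\sum_{k=N_1+1}^Np_k^\alpha$. Then, as $\varepsilon\to0+$: (i) if $N_1\ge1$ and $c_k\ne0$ for some $k\le N_1$, then $\mathcal H_\alpha(p)-\mathcal H_\alpha(p(\varepsilon))\sim\frac{\varepsilon^\alpha}{\alpha-1}\Big(\sum_{k=1}^{N_1}c_k^\alpha\Big)S^{-1}$; (ii) if $c_k=0$ for all $k\le N_1$ and $\sum_{k=N_1+1}^Nc_kp_k^{\alpha-1}\ne0$, then $\mathcal H_\alpha(p)-\mathcal H_\alpha(p(\varepsilon))\sim\frac{\alpha\varepsilon}{\alpha-1}\Big(\sum_{k=N_1+1}^Nc_kp_k^{\alpha-1}\Big)S^{-1}$; (iii) if $c_k=0$ for all $k\le N_1$ and $\sum_{k=N_1+1}^Nc_kp_k^{\alpha-1}=0$, then $\mathcal H_\alpha(p)-\mathcal H_\alpha(p(\varepsilon))\sim\frac{\alpha\varepsilon^2}{2}\Big(\sum_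{k=N_1+1}^Nc_k^2p_k^{\alpha-2}\Big)S^{-1}$.
   Context: $\mathcal H_\alpha(p)=\frac1{1-\alpha}\log\sum_kp_k^\alpha$ (Rényi entropy), with $0^\alpha=0$; logarithms are natural. $a(\varepsilon)\sim b(\varepsilon)$ means $a(\varepsilon)/b(\varepsilon)\to1$. *)

theory Defs
  imports "HOL-Analysis.Analysis"
begin

text \<open>Renyi entropy of order alpha of a vector p indexed by 1..N, with natural logarithm;
  the convention 0 to the power alpha equals 0 is built into powr.\<close>
definition renyi_entropy :: "real \<Rightarrow> nat \<Rightarrow> (nat \<Rightarrow> real) \<Rightarrow> real" where
  "renyi_entropy \<alpha> N p = (1 / (1 - \<alpha>)) * ln (\<Sum>k = 1..N. p k powr \<alpha>)"

definition perturb :: "nat \<Rightarrow> (nat \<Rightarrow> real) \<Rightarrow> (nat \<Rightarrow> real) \<Rightarrow> real \<Rightarrow> nat \<Rightarrow> real" where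
  "perturb N1 p c \<epsilon> k = (if k \<le> N1 then c k * \<epsilon> else p k + c k * \<epsilon>)"

end

theory Submission
  imports Defs
begin

(* The power sum F(e) = sum_k p_k(e)^alpha determines the entropy through ln, and
   ln F(e) - ln S ~ (F(e) - S)/S.  Coordinates k > N1 contribute smoothly
   (p_k + c_k e)^alpha = p_k^alpha + alpha p_k^(alpha-1) c_k e + O(e^2), while coordinates
   k <= N1 contribute e^alpha c_k^alpha, which dominates every linear term since alpha < 1.
   The three cases correspond to the leading term of F(e) - S being of order e^alpha, e,
   or, when the linear term cancels, e^2. *)

lemma eventually_shift_pos:
  fixes p c :: real
  assumes "p > 0"
  shows "eventually (\<lambda>e. p + c * e > 0) (at_right 0)"
proof -
  have "((\<lambda>e. p + c * e) \<longlongrightarrow> p + c * 0) (at_right 0)"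
    by (intro tendsto_intros)
  then show ?thesis
    using order_tendstoD(1)[of _ p _ 0] assms by simp
qed

lemma tendsto_powr_shift_difference_quotient:
  fixes p c a :: real
  assumes "p > 0"
  shows "((\<lambda>e. ((p + c * e) powr a - p powr a) / e) \<longlongrightarrow> a * p powr (a - 1) * c) (at_right 0)"
proof -
  have "((\<lambda>e. (p + c * e) powr a) has_real_derivative a * (p + c * 0) powr (a - 1) * (0 + c * 1)) (at 0)"
    using assms by (auto intro!: derivative_eq_intros)
  then have "((\<lambda>e. ((p + c * e) powr a - p powr a) / e) \<longlongrightarrow> a * p powr (a - 1) * c) (at 0)"
    unfolding has_field_derivative_iff by simp
  then show ?thesis
    by (rule tendsto_mono[OF at_le[OF subset_UNIV], rotated])
qed

lemma tendsto_powr_shift_second_order: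
  fixes p c a :: real
  assumes p: "p > 0"
  shows "((\<lambda>e. ((p + c * e) powr a - p powr a - a * p powr (a - 1) * c * e) / e\<^sup>2)
          \<longlongrightarrow> a * (a - 1) / 2 * c\<^sup>2 * p powr (a - 2)) (at_right 0)"
proof (rule lhopital_right_0[where f' = "\<lambda>e. a * (p + c * e) powr (a - 1) * c - a * p powr (a - 1) * c"
      and g' = "\<lambda>e. 2 * e"])
  have "((\<lambda>e. (p + c * e) powr a - p powr a - a * p powr (a - 1) * c * e) \<longlongrightarrow>
         (p + c * 0) powr a - p powr a - a * p powr (a - 1) * c * 0) (at_right 0)"
    using p by (intro tendsto_intros) auto
  then show "((\<lambda>e. (p + c * e) powr a - p powr a - a * p powr (a - 1) * c * e) \<longlongrightarrow> 0) (at_right 0)"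
    by simp
  show "((\<lambda>e. e\<^sup>2) \<longlongrightarrow> 0) (at_right (0::real))"
    by (auto intro!: tendsto_eq_intros)
  show "\<forall>\<^sub>F x in at_right 0. (x::real)\<^sup>2 \<noteq> 0" "\<forall>\<^sub>F x in at_right 0. 2 * (x::real) \<noteq> 0"
    by (auto intro: eventually_mono[OF eventually_at_right_less])
  show "\<forall>\<^sub>F x in at_right 0. ((\<lambda>e. e\<^sup>2) has_real_derivative 2 * x) (at x)"
    by (auto intro!: always_eventually derivative_eq_intros)
  show "\<forall>\<^sub>F x in at_right 0. ((\<lambda>e. (p + c * e) powr a - p powr a - a * p powr (a - 1) * c * e)
      has_real_derivative a * (p + c * x) powr (a - 1) * c - a * p powr (a - 1) * c) (at x)"
    using eventually_shift_pos[OF p, of c]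
    by eventually_elim (auto intro!: derivative_eq_intros)
  have lim: "((\<lambda>e. a * c / 2 * (((p + c * e) powr (a - 1) - p powr (a - 1)) / e)) \<longlongrightarrow>
        a * c / 2 * ((a - 1) * p powr (a - 1 - 1) * c)) (at_right 0)"
    by (intro tendsto_intros tendsto_powr_shift_difference_quotient p)
  have quotient_eq: "(\<lambda>e. (a * (p + c * e) powr (a - 1) * c - a * p powr (a - 1) * c) / (2 * e)) =
     (\<lambda>e. a * c / 2 * (((p + c * e) powr (a - 1) - p powr (a - 1)) / e))"
    by (rule ext) (simp add: field_simps)
  have limit_eq: "a * c / 2 * ((a - 1) * p powr (a - 1 - 1) * c) = a * (a - 1) / 2 * c\<^sup>2 * p powr (a - 2)"
    by (simp add: power2_eq_square)
  show "((\<lambda>e. (a * (p + c * e) powr (a - 1) * c - a * p powr (a - 1) * c) / (2 * e)) \<longlongrightarrow>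
        a * (a - 1) / 2 * c\<^sup>2 * p powr (a - 2)) (at_right 0)"
    unfolding quotient_eq limit_eq[symmetric] by (rule lim)
qed

lemma tendsto_power_sum_shift_first_order:
  fixes p c :: "nat \<Rightarrow> real" and a :: real
  assumes "finite I" "\<And>k. k \<in> I \<Longrightarrow> p k > 0"
  shows "((\<lambda>e. ((\<Sum>k\<in>I. (p k + c k * e) powr a) - (\<Sum>k\<in>I. p k powr a)) / e)
          \<longlongrightarrow> a * (\<Sum>k\<in>I. c k * p k powr (a - 1))) (at_right 0)"
proof -
  have "((\<lambda>e. \<Sum>k\<in>I. ((p k + c k * e) powr a - p k powr a) / e)
        \<longlongrightarrow> (\<Sum>k\<in>I. a * p k powr (a - 1) * c k)) (at_right 0)"
    by (intro tendsto_sum tendsto_powr_shift_difference_quotient assms)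
  then show ?thesis
    by (simp add: sum_subtractf sum_divide_distrib[symmetric] sum_distrib_left mult_ac)
qed

lemma tendsto_power_sum_shift_second_order:
  fixes p c :: "nat \<Rightarrow> real" and a :: real
  assumes "finite I" "\<And>k. k \<in> I \<Longrightarrow> p k > 0"
  shows "((\<lambda>e. ((\<Sum>k\<in>I. (p k + c k * e) powr a) - (\<Sum>k\<in>I. p k powr a)
                 - a * e * (\<Sum>k\<in>I. c k * p k powr (a - 1))) / e\<^sup>2)
          \<longlongrightarrow> a * (a - 1) / 2 * (\<Sum>k\<in>I. (c k)\<^sup>2 * p k powr (a - 2))) (at_right 0)"
proof -
  have "((\<lambda>e. \<Sum>k\<in>I. ((p k + c k * e) powr a - p k powr a - a * p k powr (a - 1) * c k * e) / e\<^sup>2)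
        \<longlongrightarrow> (\<Sum>k\<in>I. a * (a - 1) / 2 * (c k)\<^sup>2 * p k powr (a - 2))) (at_right 0)"
    by (intro tendsto_sum tendsto_powr_shift_second_order assms)
  then show ?thesis
    by (simp add: sum_subtractf sum_divide_distrib[symmetric] sum_distrib_left mult_ac)
qed

lemma tendsto_ln_difference_quotient:
  fixes F h :: "real \<Rightarrow> real"
  assumes S: "S > 0" and lim: "((\<lambda>e. (F e - S) / h e) \<longlongrightarrow> L) (at_right 0)" and L: "L \<noteq> 0"
    and h0: "(h \<longlongrightarrow> 0) (at_right 0)" and hnz: "eventually (\<lambda>e. h e \<noteq> 0) (at_right 0)"
  shows "((\<lambda>e. (ln (F e) - ln S) / h e) \<longlongrightarrow> L / S) (at_right 0)"
proof -
  have "((\<lambda>e. h e * ((F e - S) / h e)) \<longlongrightarrow> 0) (at_right 0)"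
    using tendsto_mult[OF h0 lim] by simp
  then have "((\<lambda>e. F e - S) \<longlongrightarrow> 0) (at_right 0)"
    by (rule Lim_transform_eventually) (use hnz in \<open>auto elim!: eventually_mono\<close>)
  then have F_lim: "(F \<longlongrightarrow> S) (at_right 0)"
    by (simp add: LIM_zero_iff)
  have F_ne: "eventually (\<lambda>e. F e \<noteq> S) (at_right 0)"
    using tendsto_imp_eventually_ne[OF lim L] by (auto elim!: eventually_mono)
  have "((\<lambda>y. (ln y - ln S) / (y - S)) \<longlongrightarrow> 1 / S) (at S)"
    using DERIV_ln_divide[OF S] unfolding has_field_derivative_iff .
  from tendsto_mult[OF filterlim_compose[OF this filterlim_atI[OF F_lim F_ne]] lim]
  have "((\<lambda>e. (ln (F e) - ln S) / (F e - S) * ((F e - S) / h e)) \<longlongrightarrow> L / S) (at_right 0)"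
    by simp
  then show ?thesis
    by (rule Lim_transform_eventually) (use F_ne hnz in \<open>auto elim!: eventually_mono\<close>)
qed

lemma renyi_entropy_difference_asymp:
  fixes q :: "real \<Rightarrow> nat \<Rightarrow> real" and h :: "real \<Rightarrow> real"
  assumes S: "(\<Sum>k = 1..N. p k powr \<alpha>) > 0" and "\<alpha> \<noteq> 1"
    and lim: "((\<lambda>e. ((\<Sum>k = 1..N. q e k powr \<alpha>) - (\<Sum>k = 1..N. p k powr \<alpha>)) / h e) \<longlongrightarrow> L) (at_right 0)"
    and "L \<noteq> 0" "(h \<longlongrightarrow> 0) (at_right 0)" "eventually (\<lambda>e. h e \<noteq> 0) (at_right 0)"
  shows "((\<lambda>e. (renyi_entropy \<alpha> N p - renyi_entropy \<alpha> N (q e)) /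
              (h e * L / (\<alpha> - 1) / (\<Sum>k = 1..N. p k powr \<alpha>))) \<longlongrightarrow> 1) (at_right 0)"
proof -
  let ?S = "\<Sum>k = 1..N. p k powr \<alpha>" and ?F = "\<lambda>e. \<Sum>k = 1..N. q e k powr \<alpha>"
  have "((\<lambda>e. (ln (?F e) - ln ?S) / h e * (?S / L)) \<longlongrightarrow> L / ?S * (?S / L)) (at_right 0)"
    by (intro tendsto_intros tendsto_ln_difference_quotient[OF S lim] assms)
  then have "((\<lambda>e. (ln (?F e) - ln ?S) / h e * (?S / L)) \<longlongrightarrow> 1) (at_right 0)"
    using assms by simp
  moreover have "\<forall>\<^sub>F e in at_right 0. (ln (?F e) - ln ?S) / h e * (?S / L) =
      (renyi_entropy \<alpha> N p - renyi_entropy \<alpha> N (q e)) / (h e * L / (\<alpha> - 1) / ?S)"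
    using assms(6)
  proof eventually_elim
    case (elim e)
    have "1 / (1 - \<alpha>) * x - 1 / (1 - \<alpha>) * y = (y - x) / (\<alpha> - 1)" for x y :: real
      by (metis diff_divide_distrib minus_diff_eq minus_divide_divide times_divide_eq_left mult_1)
    moreover have "d / h e * (?S / L) = d / (\<alpha> - 1) / (h e * L / (\<alpha> - 1) / ?S)" for d
      using elim assms by (simp add: field_simps)
    ultimately show ?case
      unfolding renyi_entropy_def by presburger
  qed
  ultimately show ?thesis
    by (rule Lim_transform_eventually)
qed

locale renyi_perturbation =
  fixes \<alpha> :: real and N N1 :: nat and p c :: "nat \<Rightarrow> real"
  assumes alpha_pos: "0 < \<alpha>" and alpha_less_one: "\<alpha> < 1" and N1_less: "N1 < N"
    and p_zero: "\<And>k. 1 \<le> k \<Longrightarrow> k \<le> N1 \<Longrightarrow> p k = 0"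
    and p_pos: "\<And>k. N1 < k \<Longrightarrow> k \<le> N \<Longrightarrow> p k > 0"
    and c_nonneg: "\<And>k. 1 \<le> k \<Longrightarrow> k \<le> N1 \<Longrightarrow> 0 \<le> c k"
begin

lemma sum_split_at_N1: "(\<Sum>k = 1..N. f k) = (\<Sum>k = 1..N1. f k) + (\<Sum>k = N1 + 1..N. f k)"
proof -
  have "{1..N} = {1..N1} \<union> {N1 + 1..N}" using N1_less by auto
  then show ?thesis by (simp add: sum.union_disjoint)
qed

lemma power_sum_eq: "(\<Sum>k = 1..N. p k powr \<alpha>) = (\<Sum>k = N1 + 1..N. p k powr \<alpha>)"
  unfolding sum_split_at_N1[of "\<lambda>k. p k powr \<alpha>"] by (simp add: p_zero)

lemma power_sum_pos: "(\<Sum>k = 1..N. p k powr \<alpha>) > 0"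
  unfolding power_sum_eq by (rule sum_pos2[where i = N]) (use N1_less p_pos[of N] in auto)

lemma perturb_power_sum:
  assumes "e > 0"
  shows "(\<Sum>k = 1..N. perturb N1 p c e k powr \<alpha>) =
    e powr \<alpha> * (\<Sum>k = 1..N1. c k powr \<alpha>) + (\<Sum>k = N1 + 1..N. (p k + c k * e) powr \<alpha>)"
proof -
  have "(\<Sum>k = 1..N1. perturb N1 p c e k powr \<alpha>) = (\<Sum>k = 1..N1. e powr \<alpha> * c k powr \<alpha>)"
    by (rule sum.cong) (use c_nonneg assms in \<open>auto simp: perturb_def powr_mult mult.commute\<close>)
  moreover have "(\<Sum>k = N1 + 1..N. perturb N1 p c e k powr \<alpha>) = (\<Sum>k = N1 + 1..N. (p k + c k * e) powr \<alpha>)"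
    by (rule sum.cong) (auto simp: perturb_def)
  ultimately show ?thesis
    unfolding sum_split_at_N1[of "\<lambda>k. perturb N1 p c e k powr \<alpha>"] by (simp add: sum_distrib_left)
qed

lemma perturb_power_sum_no_boundary:
  assumes "\<forall>k\<in>{1..N1}. c k = 0" "e > 0"
  shows "(\<Sum>k = 1..N. perturb N1 p c e k powr \<alpha>) = (\<Sum>k = N1 + 1..N. (p k + c k * e) powr \<alpha>)"
  using perturb_power_sum[OF assms(2)] assms(1) by simp

lemma smooth_power_sum_first_order:
  "((\<lambda>e. ((\<Sum>k = N1 + 1..N. (p k + c k * e) powr \<alpha>) - (\<Sum>k = 1..N. p k powr \<alpha>)) / e)
    \<longlongrightarrow> \<alpha> * (\<Sum>k = N1 + 1..N. c k * p k powr (\<alpha> - 1))) (at_right 0)"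
  unfolding power_sum_eq by (rule tendsto_power_sum_shift_first_order) (use p_pos in auto)

lemma power_sum_boundary_regime:
  "((\<lambda>e. ((\<Sum>k = 1..N. perturb N1 p c e k powr \<alpha>) - (\<Sum>k = 1..N. p k powr \<alpha>)) / e powr \<alpha>)
    \<longlongrightarrow> (\<Sum>k = 1..N1. c k powr \<alpha>)) (at_right 0)"
proof -
  let ?C = "\<Sum>k = 1..N1. c k powr \<alpha>"
  have "((\<lambda>e. e powr (1 - \<alpha>)) \<longlongrightarrow> 0) (at_right (0::real))"
    using alpha_less_one by (intro tendsto_zero_powrI tendsto_ident_at)
      (auto intro: eventually_mono[OF eventually_at_right_less])
  from tendsto_add[OF tendsto_const tendsto_mult[OF smooth_power_sum_first_order this]]
  have "((\<lambda>e. ?C + ((\<Sum>k = N1 + 1..N. (p k + c k * e) powr \<alpha>) - (\<Sum>k = 1..N. p k powr \<alpha>)) / e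
                  * e powr (1 - \<alpha>)) \<longlongrightarrow> ?C) (at_right 0)"
    by simp
  moreover have "\<forall>\<^sub>F e in at_right 0. ?C + ((\<Sum>k = N1 + 1..N. (p k + c k * e) powr \<alpha>) - (\<Sum>k = 1..N. p k powr \<alpha>)) / e
        * e powr (1 - \<alpha>) = ((\<Sum>k = 1..N. perturb N1 p c e k powr \<alpha>) - (\<Sum>k = 1..N. p k powr \<alpha>)) / e powr \<alpha>"
  proof (rule eventually_mono[OF eventually_at_right_less])
    fix e :: real
    assume e: "e > 0"
    have "(x - y) / e * e powr (1 - \<alpha>) = (x - y) / e powr \<alpha>" for x y
      using e by (simp add: powr_diff)
    moreover have "?C + (x - y) / e powr \<alpha> = (e powr \<alpha> * ?C + x - y) / e powr \<alpha>" for x y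
      using e by (simp add: field_simps)
    ultimately show "?C + ((\<Sum>k = N1 + 1..N. (p k + c k * e) powr \<alpha>) - (\<Sum>k = 1..N. p k powr \<alpha>)) / e
        * e powr (1 - \<alpha>) = ((\<Sum>k = 1..N. perturb N1 p c e k powr \<alpha>) - (\<Sum>k = 1..N. p k powr \<alpha>)) / e powr \<alpha>"
      unfolding perturb_power_sum[OF e] power_sum_eq by simp
  qed
  ultimately show ?thesis
    by (rule Lim_transform_eventually)
qed

lemma power_sum_first_order_regime:
  assumes "\<forall>k\<in>{1..N1}. c k = 0"
  shows "((\<lambda>e. ((\<Sum>k = 1..N. perturb N1 p c e k powr \<alpha>) - (\<Sum>k = 1..N. p k powr \<alpha>)) / e)
    \<longlongrightarrow> \<alpha> * (\<Sum>k = N1 + 1..N. c k * p k powr (\<alpha> - 1))) (at_right 0)"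
proof (rule Lim_transform_eventually[OF smooth_power_sum_first_order])
  show "\<forall>\<^sub>F e in at_right 0. ((\<Sum>k = N1 + 1..N. (p k + c k * e) powr \<alpha>) - (\<Sum>k = 1..N. p k powr \<alpha>)) / e =
      ((\<Sum>k = 1..N. perturb N1 p c e k powr \<alpha>) - (\<Sum>k = 1..N. p k powr \<alpha>)) / e"
    using eventually_at_right_less
    by eventually_elim (use perturb_power_sum_no_boundary[OF assms] in simp)
qed

lemma power_sum_second_order_regime:
  assumes "\<forall>k\<in>{1..N1}. c k = 0" "(\<Sum>k = N1 + 1..N. c k * p k powr (\<alpha> - 1)) = 0"
  shows "((\<lambda>e. ((\<Sum>k = 1..N. perturb N1 p c e k powr \<alpha>) - (\<Sum>k = 1..N. p k powr \<alpha>)) / e\<^sup>2)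
    \<longlongrightarrow> \<alpha> * (\<alpha> - 1) / 2 * (\<Sum>k = N1 + 1..N. (c k)\<^sup>2 * p k powr (\<alpha> - 2))) (at_right 0)"
proof (rule Lim_transform_eventually)
  show "((\<lambda>e. ((\<Sum>k = N1 + 1..N. (p k + c k * e) powr \<alpha>) - (\<Sum>k = 1..N. p k powr \<alpha>)) / e\<^sup>2)
    \<longlongrightarrow> \<alpha> * (\<alpha> - 1) / 2 * (\<Sum>k = N1 + 1..N. (c k)\<^sup>2 * p k powr (\<alpha> - 2))) (at_right 0)"
    using tendsto_power_sum_shift_second_order[of "{N1 + 1..N}" p c \<alpha>] p_pos
    unfolding power_sum_eq assms(2) by simp
  show "\<forall>\<^sub>F e in at_right 0. ((\<Sum>k = N1 + 1..N. (p k + c k * e) powr \<alpha>) - (\<Sum>k = 1..N. p k powr \<alpha>)) / e\<^sup>2 =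
      ((\<Sum>k = 1..N. perturb N1 p c e k powr \<alpha>) - (\<Sum>k = 1..N. p k powr \<alpha>)) / e\<^sup>2"
    using eventually_at_right_less
    by eventually_elim (use perturb_power_sum_no_boundary[OF assms(1)] in simp)
qed

lemma renyi_boundary_regime:
  assumes "\<exists>k\<in>{1..N1}. c k \<noteq> 0"
  shows "((\<lambda>\<epsilon>. (renyi_entropy \<alpha> N p - renyi_entropy \<alpha> N (perturb N1 p c \<epsilon>)) /
    (\<epsilon> powr \<alpha> / (\<alpha> - 1) * (\<Sum>k = 1..N1. c k powr \<alpha>) / (\<Sum>k = N1 + 1..N. p k powr \<alpha>))) \<longlongrightarrow> 1) (at_right 0)"
proof -
  from assms obtain k0 where k0: "k0 \<in> {1..N1}" "c k0 \<noteq> 0"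
    by auto
  with c_nonneg have "(\<Sum>k = 1..N1. c k powr \<alpha>) > 0"
    by (intro sum_pos2[OF _ k0(1)]) (auto simp: order.strict_iff_order)
  moreover have "((\<lambda>e. e powr \<alpha>) \<longlongrightarrow> 0) (at_right (0::real))"
    using alpha_pos by (intro tendsto_zero_powrI tendsto_ident_at)
      (auto intro: eventually_mono[OF eventually_at_right_less])
  moreover have "\<forall>\<^sub>F e in at_right 0. e powr \<alpha> \<noteq> 0"
    by (rule eventually_mono[OF eventually_at_right_less]) simp
  ultimately show ?thesis
    unfolding power_sum_eq[symmetric]
    using renyi_entropy_difference_asymp[OF power_sum_pos _ power_sum_boundary_regime] alpha_less_one
    by (simp add: mult_ac)
qed

lemma renyi_first_order_regime:
  assumes "\<forall>k\<in>{1..N1}. c k = 0" "(\<Sum>k = N1 + 1..N. c k * p k powr (\<alpha> - 1)) \<noteq> 0"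
  shows "((\<lambda>\<epsilon>. (renyi_entropy \<alpha> N p - renyi_entropy \<alpha> N (perturb N1 p c \<epsilon>)) /
    (\<alpha> * \<epsilon> / (\<alpha> - 1) * (\<Sum>k = N1 + 1..N. c k * p k powr (\<alpha> - 1)) / (\<Sum>k = N1 + 1..N. p k powr \<alpha>)))
    \<longlongrightarrow> 1) (at_right 0)"
proof -
  have "\<forall>\<^sub>F e in at_right 0. e \<noteq> (0::real)"
    by (rule eventually_mono[OF eventually_at_right_less]) simp
  then show ?thesis
    unfolding power_sum_eq[symmetric]
    using renyi_entropy_difference_asymp[OF power_sum_pos _ power_sum_first_order_regime[OF assms(1)]]
      assms(2) alpha_pos alpha_less_one
    by (simp add: tendsto_ident_at mult_ac)
qed

lemma renyi_second_order_regime: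
  assumes "\<forall>k\<in>{1..N1}. c k = 0" "(\<Sum>k = N1 + 1..N. c k * p k powr (\<alpha> - 1)) = 0"
    and "\<exists>k\<in>{N1 + 1..N}. c k \<noteq> 0"
  shows "((\<lambda>\<epsilon>. (renyi_entropy \<alpha> N p - renyi_entropy \<alpha> N (perturb N1 p c \<epsilon>)) /
    (\<alpha> * \<epsilon>\<^sup>2 / 2 * (\<Sum>k = N1 + 1..N. (c k)\<^sup>2 * p k powr (\<alpha> - 2)) / (\<Sum>k = N1 + 1..N. p k powr \<alpha>)))
    \<longlongrightarrow> 1) (at_right 0)"
proof -
  let ?Q = "\<Sum>k = N1 + 1..N. (c k)\<^sup>2 * p k powr (\<alpha> - 2)"
  from assms(3) obtain k0 where k0: "k0 \<in> {N1 + 1..N}" "c k0 \<noteq> 0"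
    by blast
  with p_pos[of k0] have "?Q > 0"
    by (intro sum_pos2[OF _ k0(1)]) auto
  then have L: "\<alpha> * (\<alpha> - 1) / 2 * ?Q \<noteq> 0"
    using alpha_pos alpha_less_one by simp
  have h0: "((\<lambda>e. e\<^sup>2) \<longlongrightarrow> 0) (at_right (0::real))"
    by (auto intro!: tendsto_eq_intros)
  have h_ne: "\<forall>\<^sub>F e in at_right 0. e\<^sup>2 \<noteq> (0::real)"
    by (rule eventually_mono[OF eventually_at_right_less]) simp
  have alpha_ne: "\<alpha> \<noteq> 1"
    using alpha_less_one by simp
  have "((\<lambda>e. (renyi_entropy \<alpha> N p - renyi_entropy \<alpha> N (perturb N1 p c e)) /
      (e\<^sup>2 * (\<alpha> * (\<alpha> - 1) / 2 * ?Q) / (\<alpha> - 1) / (\<Sum>k = 1..N. p k powr \<alpha>))) \<longlongrightarrow> 1) (at_right 0)"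
    by (rule renyi_entropy_difference_asymp[OF power_sum_pos alpha_ne
          power_sum_second_order_regime[OF assms(1,2)] L h0 h_ne])
  moreover have "x * (\<alpha> * (\<alpha> - 1) / 2 * Q) / (\<alpha> - 1) = \<alpha> * x / 2 * Q" for x Q :: real
  proof -
    have "x * (\<alpha> * (\<alpha> - 1) / 2 * Q) = \<alpha> * x / 2 * Q * (\<alpha> - 1)"
      by (simp add: algebra_simps)
    moreover have "\<alpha> - 1 \<noteq> 0"
      using alpha_ne by simp
    ultimately show ?thesis
      by (metis nonzero_mult_div_cancel_right)
  qed
  ultimately show ?thesis
    unfolding power_sum_eq[symmetric] by (simp only:)
qed

end

theorem mainTheorem8:
  fixes \<alpha> :: real and N N1 :: nat and p c :: "nat \<Rightarrow> real"
  assumes alpha: "0 < \<alpha>" "\<alpha> < 1"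
    and N: "1 \<le> N" "N1 < N"
    and p_sum: "(\<Sum>k = 1..N. p k) = 1"
    and p_zero: "\<And>k. 1 \<le> k \<Longrightarrow> k \<le> N1 \<Longrightarrow> p k = 0"
    and p_pos: "\<And>k. N1 < k \<Longrightarrow> k \<le> N \<Longrightarrow> p k > 0"
    and c_nz: "\<exists>k\<in>{1..N}. c k \<noteq> 0"
    and c_low: "\<And>k. 1 \<le> k \<Longrightarrow> k \<le> N1 \<Longrightarrow> 0 \<le> c k \<and> c k \<le> 1"
    and c_high: "\<And>k. N1 < k \<Longrightarrow> k \<le> N \<Longrightarrow> \<bar>c k\<bar> \<le> 1"
    and c_sum: "(\<Sum>k = 1..N. c k) = 0"
  defines "S \<equiv> (\<Sum>k = N1 + 1..N. p k powr \<alpha>)"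
  shows
    "(1 \<le> N1 \<and> (\<exists>k\<in>{1..N1}. c k \<noteq> 0) \<longrightarrow>
       ((\<lambda>\<epsilon>. (renyi_entropy \<alpha> N p - renyi_entropy \<alpha> N (perturb N1 p c \<epsilon>)) /
              (\<epsilon> powr \<alpha> / (\<alpha> - 1) * (\<Sum>k = 1..N1. c k powr \<alpha>) / S))
        \<longlongrightarrow> 1) (at_right 0))
   \<and> ((\<forall>k\<in>{1..N1}. c k = 0) \<and> (\<Sum>k = N1 + 1..N. c k * p k powr (\<alpha> - 1)) \<noteq> 0 \<longrightarrow>
       ((\<lambda>\<epsilon>. (renyi_entropy \<alpha> N p - renyi_entropy \<alpha> N (perturb N1 p c \<epsilon>)) /
              (\<alpha> * \<epsilon> / (\<alpha> - 1) * (\<Sum>k = N1 + 1..N. c k * p k powr (\<alpha> - 1)) / S))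
        \<longlongrightarrow> 1) (at_right 0))
   \<and> ((\<forall>k\<in>{1..N1}. c k = 0) \<and> (\<Sum>k = N1 + 1..N. c k * p k powr (\<alpha> - 1)) = 0 \<longrightarrow>
       ((\<lambda>\<epsilon>. (renyi_entropy \<alpha> N p - renyi_entropy \<alpha> N (perturb N1 p c \<epsilon>)) /
              (\<alpha> * \<epsilon>\<^sup>2 / 2 * (\<Sum>k = N1 + 1..N. (c k)\<^sup>2 * p k powr (\<alpha> - 2)) / S))
        \<longlongrightarrow> 1) (at_right 0))"
proof -
  interpret renyi_perturbation \<alpha> N N1 p c
    using assms by unfold_locales auto
  (* p_sum, c_sum, c_high and the bound c k \<le> 1 only make p(\<epsilon>) a probability vector;
     the asymptotics do not use them. *)
  have "\<exists>k\<in>{N1 + 1..N}. c k \<noteq> 0" if "\<forall>k\<in>{1..N1}. c k = 0"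
    using c_nz that by (metis Suc_eq_plus1 atLeastAtMost_iff not_less_eq_eq)
  then show ?thesis
    unfolding S_def
    using renyi_boundary_regime renyi_first_order_regime renyi_second_order_regime by blast
qed

end
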